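(* Let $n>1$, $m\ge1$, let $v\in Z_{n,m}$, let $P$ be a pivot path of $v$ (to $0$), and let $I$ be a $P$-interval. Then for all $i,j$ with $[i,i+1]\subseteq I$ and $[j,j+1]\subseteq I$, all steps of $P$ that are shifts at $i$ and all steps of $P$ that are shifts at $j$ are in the same direction.
   Context: Elements of $\mathbb{Z}_n$ are identified with representatives in $\{0,\dots,n-1\}$. $Z_{n,m}$ has vertices $u=(u_0,\dots,u_{m+1})\in\mathbb{Z}_n\times\{-1,0,1\}^m\times\mathbb{Z}_n$ with $\sum u_i\equiv0\pmod n$. A step from $v$ to $u$ is a left shift at $i$ ($0\le i\le m$) if $u_j=v_j$ for $j\notin\{i,i+1\}$, $u_i=v_i+1$, $u_{i+1}=v_{i+1}-1$, and a right shift at $i$ if $u_i=v_i-1$, $u_{i+1}=v_{i+1}+1$ (arithmetic in coordinates $0,m+1$ in $\mathbb{Z}_n$); vertices are adjacent iff related by such a shift. For a path $P$ from $v$ to the all-zero vertex $0$: $0\le p\le m$ is an inner wall of $P$ if no step of $P$ is a shift at $p$; $-1$ is a wall if no step is a left shift at $0$; $m+1$ is a wall if no step is a right shift at $m$. A $p$-pivot path of $v$ is a shortest path from $v$ to $0$ among those having $p$ as a wall; a pivot path is a $p$-pivot path for some $p$. If $p_1<\dots<p_t$ are the inner walls of a pivot path $P$ and $p_0=-1$, $p_{t+1}=m+1$, the $P$-intervals are the integer intervals $[p_k+1,p_{k+1}]$, $0\le k\le t$. *)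

theory Defs
  imports Main
begin

(* Vertices of Z_{n,m}: integer lists u = [u_0,...,u_{m+1}] of length m+2 with
   u_0, u_{m+1} representatives in {0..n-1} of Z_n, middle entries in {-1,0,1},
   and sum congruent to 0 mod n. *)
definition is_vertex :: "nat \<Rightarrow> nat \<Rightarrow> int list \<Rightarrow> bool" where
  "is_vertex n m u \<longleftrightarrow> length u = m + 2 \<and> u ! 0 \<in> {0..<int n} \<and> u ! (m+1) \<in> {0..<int n}
     \<and> (\<forall>j\<in>{1..m}. u ! j \<in> {-1, 0, 1}) \<and> sum_list u mod int n = 0"

definition zero_vertex :: "nat \<Rightarrow> int list" where
  "zero_vertex m = replicate (m + 2) 0"

datatype dir = Left | Right

definition dir_val :: "dir \<Rightarrow> int" where
  "dir_val d = (case d of Left \<Rightarrow> 1 | Right \<Rightarrow> -1)"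

definition addc :: "nat \<Rightarrow> nat \<Rightarrow> nat \<Rightarrow> int \<Rightarrow> int \<Rightarrow> int" where
  "addc n m j x c = (if j = 0 \<or> j = m + 1 then (x + c) mod int n else x + c)"

definition shift :: "nat \<Rightarrow> nat \<Rightarrow> dir \<Rightarrow> nat \<Rightarrow> int list \<Rightarrow> int list \<Rightarrow> bool" where
  "shift n m d i v u \<longleftrightarrow> i \<le> m \<and> length v = m + 2 \<and> length u = m + 2
     \<and> (\<forall>j < m + 2. j \<noteq> i \<and> j \<noteq> i + 1 \<longrightarrow> u ! j = v ! j)
     \<and> u ! i = addc n m i (v ! i) (dir_val d)
     \<and> u ! (i+1) = addc n m (i+1) (v ! (i+1)) (- dir_val d)"

definition adjacent :: "nat \<Rightarrow> nat \<Rightarrow> int list \<Rightarrow> int list \<Rightarrow> bool" where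
  "adjacent n m v u \<longleftrightarrow> is_vertex n m v \<and> is_vertex n m u \<and> (\<exists>d i. shift n m d i v u)"

definition is_path :: "nat \<Rightarrow> nat \<Rightarrow> int list list \<Rightarrow> int list \<Rightarrow> bool" where
  "is_path n m P v \<longleftrightarrow> P \<noteq> [] \<and> hd P = v \<and> last P = zero_vertex m \<and> distinct P
     \<and> (\<forall>x\<in>set P. is_vertex n m x)
     \<and> (\<forall>k. Suc k < length P \<longrightarrow> adjacent n m (P ! k) (P ! Suc k))"

definition path_len :: "int list list \<Rightarrow> nat" where
  "path_len P = length P - 1"

definition has_step :: "nat \<Rightarrow> nat \<Rightarrow> int list list \<Rightarrow> dir \<Rightarrow> nat \<Rightarrow> bool" where
  "has_step n m P d i \<longleftrightarrow> (\<exists>k. Suc k < length P \<and> shift n m d i (P ! k) (P ! Suc k))"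

definition inner_walls :: "nat \<Rightarrow> nat \<Rightarrow> int list list \<Rightarrow> int set" where
  "inner_walls n m P = {p. 0 \<le> p \<and> p \<le> int m \<and> \<not> (\<exists>d. has_step n m P d (nat p))}"

definition is_wall :: "nat \<Rightarrow> nat \<Rightarrow> int list list \<Rightarrow> int \<Rightarrow> bool" where
  "is_wall n m P p \<longleftrightarrow> p \<in> inner_walls n m P
     \<or> (p = -1 \<and> \<not> has_step n m P Left 0)
     \<or> (p = int m + 1 \<and> \<not> has_step n m P Right m)"

definition p_pivot_path :: "nat \<Rightarrow> nat \<Rightarrow> int \<Rightarrow> int list \<Rightarrow> int list list \<Rightarrow> bool" where
  "p_pivot_path n m p v P \<longleftrightarrow> is_path n m P v \<and> is_wall n m P p
     \<and> (\<forall>Q. is_path n m Q v \<and> is_wall n m Q p \<longrightarrow> path_len P \<le> path_len Q)"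

definition pivot_path :: "nat \<Rightarrow> nat \<Rightarrow> int list \<Rightarrow> int list list \<Rightarrow> bool" where
  "pivot_path n m v P \<longleftrightarrow> (\<exists>p. p_pivot_path n m p v P)"

definition P_interval :: "nat \<Rightarrow> nat \<Rightarrow> int list list \<Rightarrow> int set \<Rightarrow> bool" where
  "P_interval n m P I \<longleftrightarrow> (let W = {-1, int m + 1} \<union> inner_walls n m P in
     \<exists>a b. a \<in> W \<and> b \<in> W \<and> a < b \<and> (\<forall>c\<in>W. \<not> (a < c \<and> c < b)) \<and> I = {a + 1..b})"

end

theory Submission imports Defs begin

text \<open>
Let D i be the number of left minus the number of right shifts at i made by a path P from v
to 0. Then every middle coordinate of v is v_j = D (j-1) - D j, and v_0 + D 0 is divisible by n.
Conversely, from any such D a greedy path reaches 0 in sum |D i| steps, shifting at each i only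
in the direction of the sign of D i; when D comes from P, every shift of the greedy path is also
a shift of P, so the greedy path keeps all walls of P. A pivot path that shifted at some i in
both directions would be longer than sum |D i|, contradicting its minimality. Hence on a pivot
path every shift at i goes in the direction of the sign of D i. Inside a P-interval every
position carries a shift, so D has no zero there, while consecutive values of D differ by a
middle coordinate of v, hence by at most 1: so D keeps its sign on the interval.
\<close>

lemma sum_list_update_int:
  "k < length xs \<Longrightarrow> sum_list (xs[k := (x::int)]) = sum_list xs + x - xs ! k"
  by (induction xs arbitrary: k) (auto split: nat.split)

lemma dir_val_cases: "dir_val d \<in> {1, -1}"
  by (cases d) (auto simp: dir_val_def)

lemma addc_neq:
  assumes "n > 1" "c \<in> {1, -1}"
  shows "addc n m j x c \<noteq> x"
proof
  assume eq: "addc n m j x c = x"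
  show False
  proof (cases "j = 0 \<or> j = m + 1")
    case True
    then have "(x + c) mod int n = x mod int n"
      using eq by (metis addc_def mod_mod_trivial)
    then have "int n dvd (x + c) - x" by (simp only: mod_eq_dvd_iff)
    with assms show False by auto
  next
    case False
    with eq assms show False by (auto simp: addc_def)
  qed
qed

lemma shift_changes:
  assumes "n > 1" "shift n m d i x y"
  shows "y ! i \<noteq> x ! i" "y ! (i+1) \<noteq> x ! (i+1)"
  using assms addc_neq[of n "dir_val d" m i "x!i"] addc_neq[of n "- dir_val d" m "i+1" "x!(i+1)"]
    dir_val_cases[of d] by (auto simp: shift_def)

lemma shift_unique:
  assumes "n > 1" "m \<ge> 1" "shift n m d i x y" "shift n m d' i' x y"
  shows "d = d' \<and> i = i'"
proof -
  have "i = i'"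
  proof (rule ccontr)
    assume "i \<noteq> i'"
    then have "y ! min i i' = x ! min i i'"
      using assms(3,4) unfolding shift_def by (auto simp: min_def)
    then show False
      using shift_changes(1)[OF assms(1,3)] shift_changes(1)[OF assms(1,4)]
      by (auto simp: min_def split: if_splits)
  qed
  moreover have "d = d'"
  proof (rule ccontr)
    assume "d \<noteq> d'"
    then have dv: "dir_val d' = - dir_val d" "dir_val d \<in> {1,-1}"
      by (cases d; cases d'; simp add: dir_val_def)+
    have "i \<le> m" using assms(3) by (simp add: shift_def)
    \<comment> \<open>the middle one of the coordinates i, i+1 (as m \<ge> 1) moves by both +1 and -1\<close>
    then have "y!(i+1) = x!(i+1) - dir_val d \<and> y!(i+1) = x!(i+1) + dir_val d
        \<or> y!i = x!i + dir_val d \<and> y!i = x!i - dir_val d"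
      using assms(2,3,4) \<open>i = i'\<close> dv unfolding shift_def addc_def by (cases "i = 0") auto
    then show False using dv by auto
  qed
  ultimately show ?thesis by simp
qed

text \<open>D i is the net number of left over right shifts at i that still lead from x to 0.\<close>

definition potential :: "nat \<Rightarrow> nat \<Rightarrow> int list \<Rightarrow> (nat \<Rightarrow> int) \<Rightarrow> bool" where
  "potential n m x D \<longleftrightarrow>
     (\<forall>j. 1 \<le> j \<and> j \<le> m \<longrightarrow> x!j = D (j-1) - D j) \<and> (x!0 + D 0) mod int n = 0"

lemma potential_shift:
  assumes "shift n m d i x y"
  shows "potential n m y (D(i := D i - dir_val d)) \<longleftrightarrow> potential n m x D"
proof -
  define c where "c = dir_val d"
  define D' where "D' = D(i := D i - c)"
  have oth: "\<And>j. j < m+2 \<Longrightarrow> j \<noteq> i \<Longrightarrow> j \<noteq> i+1 \<Longrightarrow> y!j = x!j"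
    and yi: "y!i = addc n m i (x!i) c" and yi1: "y!(i+1) = addc n m (i+1) (x!(i+1)) (-c)"
    using assms by (auto simp: shift_def c_def)
  have mid: "(y!j = D' (j-1) - D' j) \<longleftrightarrow> (x!j = D (j-1) - D j)" if "1 \<le> j" "j \<le> m" for j
  proof -
    consider "j = i" | "j = i+1" | "j \<noteq> i" "j \<noteq> i+1" by blast
    then show ?thesis
    proof cases
      case 1
      then have "y!j = x!j + c" "D' (j-1) - D' j = D (j-1) - D j + c"
        using yi that by (auto simp: addc_def D'_def)
      then show ?thesis by auto
    next
      case 2
      then have "y!j = x!j - c" "D' (j-1) - D' j = D (j-1) - D j - c"
        using yi1 that by (auto simp: addc_def D'_def)
      then show ?thesis by auto
    next
      case 3
      then have "y!j = x!j" "D' (j-1) - D' j = D (j-1) - D j"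
        using oth that by (auto simp: D'_def)
      then show ?thesis by auto
    qed
  qed
  have zero: "(y!0 + D' 0) mod int n = 0 \<longleftrightarrow> (x!0 + D 0) mod int n = 0"
  proof (cases "i = 0")
    case True
    then have "(y!0 + D' 0) mod int n = ((x!0 + c) mod int n + (D 0 - c)) mod int n"
      using yi by (simp add: addc_def D'_def)
    also have "\<dots> = (x!0 + D 0) mod int n" by (simp add: mod_add_left_eq)
    finally show ?thesis by simp
  next
    case False
    then show ?thesis using oth[of 0] by (simp add: D'_def)
  qed
  show ?thesis
    using mid zero unfolding potential_def c_def[symmetric] D'_def[symmetric] by auto
qed

lemma has_step_Cons:
  "has_step n m (x # y # r) d i \<longleftrightarrow> shift n m d i x y \<or> has_step n m (y # r) d i"
  unfolding has_step_def
proof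
  assume "\<exists>k. Suc k < length (x # y # r) \<and> shift n m d i ((x # y # r) ! k) ((x # y # r) ! Suc k)"
  then obtain k where "Suc k < length (x # y # r)"
      "shift n m d i ((x # y # r) ! k) ((x # y # r) ! Suc k)" by blast
  then show "shift n m d i x y \<or>
      (\<exists>k. Suc k < length (y # r) \<and> shift n m d i ((y # r) ! k) ((y # r) ! Suc k))"
    by (cases k) auto
qed (auto intro: exI[of _ 0] exI[of _ "Suc _"])

lemma walk_shift_counts:
  assumes "n > 1" "m \<ge> 1"
  shows "Q \<noteq> [] \<Longrightarrow> last Q = zero_vertex m \<Longrightarrow>
    (\<forall>k. Suc k < length Q \<longrightarrow> adjacent n m (Q!k) (Q!Suc k)) \<Longrightarrow>
    \<exists>Lc Rc :: nat \<Rightarrow> nat. potential n m (hd Q) (\<lambda>i. int (Lc i) - int (Rc i))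
      \<and> (\<Sum>i\<le>m. Lc i + Rc i) = length Q - 1
      \<and> (\<forall>i. Lc i > 0 \<longleftrightarrow> has_step n m Q Left i)
      \<and> (\<forall>i. Rc i > 0 \<longleftrightarrow> has_step n m Q Right i)"
proof (induction Q)
  case Nil
  then show ?case by simp
next
  case (Cons x Q')
  show ?case
  proof (cases Q')
    case Nil
    then have "x = zero_vertex m" using Cons.prems by simp
    then have "\<forall>j < m+2. x!j = 0" unfolding zero_vertex_def by (metis nth_replicate)
    then have "potential n m x (\<lambda>i. 0)" by (simp add: potential_def)
    then show ?thesis using Nil by (intro exI[of _ "\<lambda>i. 0"]) (simp add: has_step_def)
  next
    case (Cons y r)
    from Cons.IH Cons.prems Cons obtain Lc Rc where
      IH: "potential n m y (\<lambda>i. int (Lc i) - int (Rc i))" "(\<Sum>i\<le>m. Lc i + Rc i) = length Q' - 1"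
          "\<forall>i. Lc i > 0 \<longleftrightarrow> has_step n m Q' Left i" "\<forall>i. Rc i > 0 \<longleftrightarrow> has_step n m Q' Right i"
      by fastforce
    have "adjacent n m x y" using Cons.prems(3)[rule_format, of 0] Cons by simp
    then obtain d i0 where sh: "shift n m d i0 x y" unfolding adjacent_def by blast
    have i0m: "i0 \<le> m" using sh by (simp add: shift_def)
    have step_at: "shift n m d' i x y \<longleftrightarrow> i = i0 \<and> d' = d" for d' i
      using shift_unique[OF assms sh, of d' i] sh by auto
    define Lc' where "Lc' = (\<lambda>i. Lc i + (if i = i0 \<and> d = Left then 1 else 0::nat))"
    define Rc' where "Rc' = (\<lambda>i. Rc i + (if i = i0 \<and> d = Right then 1 else 0::nat))"
    have "(\<lambda>i. int (Lc i) - int (Rc i)) =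
        (\<lambda>i. int (Lc' i) - int (Rc' i))(i0 := int (Lc' i0) - int (Rc' i0) - dir_val d)"
      by (cases d) (auto simp: Lc'_def Rc'_def dir_val_def)
    then have "potential n m x (\<lambda>i. int (Lc' i) - int (Rc' i))"
      using potential_shift[OF sh, of "\<lambda>i. int (Lc' i) - int (Rc' i)"] IH(1) by argo
    moreover have "(\<Sum>i\<le>m. Lc' i + Rc' i) = (\<Sum>i\<le>m. Lc i + Rc i) + (\<Sum>i\<le>m. if i = i0 then 1 else 0)"
      unfolding Lc'_def Rc'_def sum.distrib[symmetric] by (intro sum.cong refl) (cases d; auto)
    then have "(\<Sum>i\<le>m. Lc' i + Rc' i) = length (x # Q') - 1"
      using IH(2) i0m Cons by simp
    moreover have "\<forall>i. Lc' i > 0 \<longleftrightarrow> has_step n m (x # Q') Left i"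
      "\<forall>i. Rc' i > 0 \<longleftrightarrow> has_step n m (x # Q') Right i"
      using IH(3,4) step_at unfolding Cons has_step_Cons Lc'_def Rc'_def by auto
    ultimately show ?thesis by auto
  qed
qed

lemma mod_replace_two_summands:
  assumes "a' mod (k::int) = (a + c) mod k" "b' mod k = (b - c) mod k"
  shows "(S - a - b + a' + b') mod k = S mod k"
proof -
  have "k dvd (a' - (a + c)) + (b' - (b - c))"
    using assms[unfolded mod_eq_dvd_iff] by (rule dvd_add)
  moreover have "(S - a - b + a' + b') - S = (a' - (a + c)) + (b' - (b - c))" by simp
  ultimately show ?thesis by (simp only: mod_eq_dvd_iff)
qed

lemma shift_sum_list_mod:
  assumes "shift n m d i x y"
  shows "sum_list y mod int n = sum_list x mod int n"
proof -
  have i: "i \<le> m" and lx: "length x = m+2"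
    and yi: "y!i = addc n m i (x!i) (dir_val d)"
    and yi1: "y!(i+1) = addc n m (i+1) (x!(i+1)) (- dir_val d)"
    using assms by (auto simp: shift_def)
  define a b where "a = y!i" and "b = y!(i+1)"
  have "y = x[i := a, i+1 := b]"
    using assms by (intro nth_equalityI) (auto simp: shift_def nth_list_update a_def b_def)
  then have "sum_list y = sum_list x - x!i - x!(i+1) + a + b"
    using i lx by (simp add: sum_list_update_int nth_list_update)
  then show ?thesis
    using mod_replace_two_summands[of a "int n" "x!i" "dir_val d" b "x!(i+1)"] yi yi1
    by (simp add: addc_def a_def b_def)
qed

lemma shift_to_vertex:
  assumes "n > 1" "is_vertex n m x" "i \<le> m"
    and "1 \<le> i \<Longrightarrow> x!i + dir_val d \<in> {-1,0,1}"
    and "i+1 \<le> m \<Longrightarrow> x!(i+1) - dir_val d \<in> {-1,0,1}"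
  defines "y \<equiv> x[i := addc n m i (x!i) (dir_val d), i+1 := addc n m (i+1) (x!(i+1)) (- dir_val d)]"
  shows "shift n m d i x y" "is_vertex n m y"
proof -
  have lx: "length x = m+2" using assms(2) by (simp add: is_vertex_def)
  have yi: "y!i = addc n m i (x!i) (dir_val d)"
    and yi1: "y!(i+1) = addc n m (i+1) (x!(i+1)) (- dir_val d)"
    and oth: "\<And>j. j \<noteq> i \<Longrightarrow> j \<noteq> i+1 \<Longrightarrow> y!j = x!j"
    using lx assms(3) by (simp_all add: y_def nth_list_update)
  show shift: "shift n m d i x y" unfolding shift_def using assms(3) lx yi yi1 oth by (simp add: y_def)
  have n_pos: "int n > 0" using assms(1) by simp
  have "y!0 \<in> {0..<int n}"
  proof (cases "i = 0")
    case True
    then show ?thesis using yi n_pos by (simp add: addc_def)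
  next
    case False
    then show ?thesis using oth[of 0] assms(2) by (simp add: is_vertex_def)
  qed
  moreover have "y!(m+1) \<in> {0..<int n}"
  proof (cases "i = m")
    case True
    then show ?thesis using yi1 n_pos by (simp add: addc_def)
  next
    case False
    then show ?thesis using oth[of "m+1"] assms(2,3) by (simp add: is_vertex_def)
  qed
  moreover have "y!j \<in> {-1,0,1}" if "j \<in> {1..m}" for j
  proof -
    consider "j = i" | "j = i+1" | "j \<noteq> i" "j \<noteq> i+1" by blast
    then show ?thesis
    proof cases
      case 1
      then show ?thesis using that yi assms(4) by (simp add: addc_def)
    next
      case 2
      then show ?thesis using that yi1 assms(5) by (simp add: addc_def)
    next
      case 3
      then show ?thesis using that oth[of j] assms(2) by (simp add: is_vertex_def)
    qed
  qed
  moreover have "sum_list y mod int n = sum_list x mod int n"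
    by (rule shift_sum_list_mod[OF shift])
  ultimately show "is_vertex n m y" using assms(2) lx by (simp add: is_vertex_def y_def)
qed

text \<open>A shift at i towards the extremal value of D (in the direction of its sign) keeps the
middle coordinates D (j-1) - D j in {-1,0,1}.\<close>

lemma greedy_shift_exists:
  assumes "n > 1" "is_vertex n m x" "potential n m x D" "\<exists>k\<le>m. D k \<noteq> 0"
  obtains d i y where "i \<le> m" "D i * dir_val d > 0" "shift n m d i x y" "is_vertex n m y"
proof -
  obtain k where k: "k \<le> m" "D k \<noteq> 0" using assms(4) by blast
  obtain d where d: "D k * dir_val d > 0"
  proof (cases "D k > 0")
    case True
    then show ?thesis using that[of Left] by (simp add: dir_val_def)
  next
    case False
    then show ?thesis using that[of Right] k(2) by (simp add: dir_val_def)
  qed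
  define f where "f j = D j * dir_val d" for j
  obtain i where "is_arg_min (\<lambda>j. - f j) (\<lambda>j. j \<in> {..m}) i"
    using ex_is_arg_min_if_finite[of "{..m}" "\<lambda>j. - f j"] by auto
  then have i: "i \<le> m" "\<And>j. j \<le> m \<Longrightarrow> f j \<le> f i"
    by (auto simp: is_arg_min_linorder)
  have pos: "D i * dir_val d > 0" using i(2)[OF k(1)] d by (simp add: f_def)
  have mid: "x!j = D (j-1) - D j" "x!j \<in> {-1,0,1}" if "1 \<le> j" "j \<le> m" for j
    using assms(2,3) that by (auto simp: potential_def is_vertex_def)
  have "x!i + dir_val d \<in> {-1,0,1}" if "1 \<le> i"
  proof -
    have "f (i-1) \<le> f i" using i by simp
    then show ?thesis using mid[of i] i(1) that by (cases d) (auto simp: f_def dir_val_def)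
  qed
  moreover have "x!(i+1) - dir_val d \<in> {-1,0,1}" if "i + 1 \<le> m"
    using mid[of "i+1"] i(2)[of "i+1"] that by (cases d) (auto simp: f_def dir_val_def)
  ultimately show ?thesis
    using that[OF i(1) pos] shift_to_vertex[OF assms(1,2) i(1)] by blast
qed

lemma sum_abs_update:
  fixes D :: "nat \<Rightarrow> int"
  assumes "i \<le> m" "D i * c > 0" "c \<in> {1, -1}"
  shows "(\<Sum>k\<le>m. \<bar>(D(i := D i - c)) k\<bar>) = (\<Sum>k\<le>m. \<bar>D k\<bar>) - 1"
proof -
  have "\<bar>D i - c\<bar> = \<bar>D i\<bar> - 1" using assms(2,3) by (auto simp: zero_less_mult_iff)
  then show ?thesis
    using assms(1) sum.remove[of "{..m}" i "\<lambda>k. \<bar>(D(i := D i - c)) k\<bar>"]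
      sum.remove[of "{..m}" i "\<lambda>k. \<bar>D k\<bar>"] by simp
qed

lemma potential_zero_imp_zero_vertex:
  assumes "is_vertex n m x" "potential n m x D" "\<forall>i\<le>m. D i = 0"
  shows "x = zero_vertex m"
proof -
  have lx: "length x = m+2" using assms by (simp add: is_vertex_def)
  have x0: "x!j = 0" if "j \<le> m" for j
    using assms that by (cases j) (auto simp: potential_def is_vertex_def)
  have "sum_list x = (\<Sum>j<m+1. x!j) + x!(m+1)" using lx by (simp add: sum_list_sum_nth atLeast0LessThan)
  then have "sum_list x = x!(m+1)" using x0 by simp
  then have "x!(m+1) mod int n = 0" "x!(m+1) \<in> {0..<int n}" using assms(1) by (auto simp: is_vertex_def)
  then have "x!(m+1) = 0" by simp
  then have "x!j = 0" if "j < m+2" for j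
    using that x0 by (cases "j \<le> m") (auto simp: less_Suc_eq)
  moreover have "replicate (m+2) (0::int) ! j = 0" if "j < m+2" for j
    using that by (rule nth_replicate)
  ultimately show ?thesis
    using lx unfolding zero_vertex_def by (intro nth_equalityI) (simp, metis)
qed

lemma greedy_walk:
  assumes "n > 1"
  shows "is_vertex n m x \<Longrightarrow> potential n m x D \<Longrightarrow> (\<Sum>i\<le>m. \<bar>D i\<bar>) = int N \<Longrightarrow>
    \<exists>W. hd W = x \<and> last W = zero_vertex m \<and> length W = Suc N \<and> (\<forall>y\<in>set W. is_vertex n m y)
      \<and> (\<forall>k. Suc k < length W \<longrightarrow> (\<exists>d i. shift n m d i (W!k) (W!Suc k) \<and> D i * dir_val d > 0))"
proof (induction N arbitrary: x D)
  case 0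
  then have "\<forall>i\<le>m. D i = 0" by (simp add: sum_nonneg_eq_0_iff)
  then have "x = zero_vertex m" using potential_zero_imp_zero_vertex 0 by blast
  then show ?case using 0 by (intro exI[of _ "[x]"]) simp
next
  case (Suc N)
  have "\<exists>k\<le>m. D k \<noteq> 0"
  proof (rule ccontr)
    assume "\<not> ?thesis"
    then have "(\<Sum>i\<le>m. \<bar>D i\<bar>) = 0" by simp
    with Suc.prems(3) show False by simp
  qed
  then obtain d i y where i: "i \<le> m" "D i * dir_val d > 0"
    and sh: "shift n m d i x y" and y: "is_vertex n m y"
    using greedy_shift_exists[OF assms Suc.prems(1,2)] by blast
  define D' where "D' = D(i := D i - dir_val d)"
  have "potential n m y D'" using potential_shift[OF sh] Suc.prems(2) by (simp add: D'_def)
  moreover have "(\<Sum>k\<le>m. \<bar>D' k\<bar>) = int N"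
    using sum_abs_update[of i m D "dir_val d"] i dir_val_cases[of d] Suc.prems(3) by (simp add: D'_def)
  ultimately obtain W where W: "hd W = y" "last W = zero_vertex m" "length W = Suc N"
      "\<forall>z\<in>set W. is_vertex n m z"
      "\<forall>k. Suc k < length W \<longrightarrow> (\<exists>d i. shift n m d i (W!k) (W!Suc k) \<and> D' i * dir_val d > 0)"
    using Suc.IH[OF y] by blast
  have sign_kept: "D j * dir_val e > 0" if "D' j * dir_val e > 0" for j e
    using that i(2) by (cases d; cases e; cases "j = i") (auto simp: D'_def dir_val_def)
  have W0: "W ! 0 = y" using W(1,3) by (cases W) auto
  show ?case
  proof (intro exI[of _ "x # W"] conjI allI impI)
    fix k assume "Suc k < length (x # W)"
    then show "\<exists>d i. shift n m d i ((x # W)!k) ((x # W)!Suc k) \<and> D i * dir_val d > 0"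
      using W(5) sign_kept sh i(2) W0 by (cases k) fastforce+
  qed (use W Suc.prems(1) in auto)
qed

lemma walk_to_distinct:
  assumes "W \<noteq> []" "\<forall>k. Suc k < length W \<longrightarrow> R (W!k) (W!Suc k)"
  obtains Q where "Q \<noteq> []" "hd Q = hd W" "last Q = last W" "distinct Q" "set Q \<subseteq> set W"
    "length Q \<le> length W" "\<forall>k. Suc k < length Q \<longrightarrow> R (Q!k) (Q!Suc k)"
proof -
  have "\<exists>Q. Q \<noteq> [] \<and> hd Q = hd W \<and> last Q = last W \<and> distinct Q \<and> set Q \<subseteq> set W
    \<and> length Q \<le> length W \<and> (\<forall>k. Suc k < length Q \<longrightarrow> R (Q!k) (Q!Suc k))"
    using assms
  proof (induction W)
    case Nil
    then show ?case by simp
  next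
    case (Cons a W')
    show ?case
    proof (cases "W' = []")
      case True
      then show ?thesis by (intro exI[of _ "[a]"]) simp
    next
      case False
      have "\<forall>k. Suc k < length W' \<longrightarrow> R (W'!k) (W'!Suc k)" using Cons.prems(2) by fastforce
      then obtain Q' where Q': "Q' \<noteq> []" "hd Q' = hd W'" "last Q' = last W'" "distinct Q'"
          "set Q' \<subseteq> set W'" "length Q' \<le> length W'" "\<forall>k. Suc k < length Q' \<longrightarrow> R (Q'!k) (Q'!Suc k)"
        using Cons.IH False by blast
      show ?thesis
      proof (cases "a \<in> set Q'")
        case True
        then obtain us ws where Q'_split: "Q' = us @ a # ws" by (meson split_list)
        have "R ((a # ws)!k) ((a # ws)!Suc k)" if "Suc k < length (a # ws)" for k
          using Q'(7)[rule_format, of "length us + k"] that Q'_split by (simp add: nth_append)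
        then show ?thesis using Q' Q'_split False by (intro exI[of _ "a # ws"]) auto
      next
        case not_in: False
        have "R a (hd Q')"
          using Cons.prems(2)[rule_format, of 0] Q'(2) False by (simp add: hd_conv_nth)
        then have "R ((a # Q')!k) ((a # Q')!Suc k)" if "Suc k < length (a # Q')" for k
          using Q'(1,7) that by (cases k) (auto simp: hd_conv_nth)
        then show ?thesis using Q' not_in False by (intro exI[of _ "a # Q'"]) auto
      qed
    qed
  qed
  then show ?thesis using that by blast
qed

lemma greedy_path:
  assumes "n > 1" "m \<ge> 1" "is_vertex n m v" "potential n m v D"
  obtains Q where "is_path n m Q v" "int (path_len Q) \<le> (\<Sum>i\<le>m. \<bar>D i\<bar>)"
    "\<And>d i. has_step n m Q d i \<Longrightarrow> D i * dir_val d > 0"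
proof -
  define N where "N = nat (\<Sum>i\<le>m. \<bar>D i\<bar>)"
  have sum_N: "(\<Sum>i\<le>m. \<bar>D i\<bar>) = int N" by (simp add: N_def sum_nonneg)
  obtain W where W: "hd W = v" "last W = zero_vertex m" "length W = Suc N"
      "\<forall>y\<in>set W. is_vertex n m y"
      "\<forall>k. Suc k < length W \<longrightarrow> (\<exists>d i. shift n m d i (W!k) (W!Suc k) \<and> D i * dir_val d > 0)"
    using greedy_walk[OF assms(1,3,4) sum_N] by blast
  define R where "R x y \<longleftrightarrow> is_vertex n m x \<and> is_vertex n m y
      \<and> (\<exists>d i. shift n m d i x y \<and> D i * dir_val d > 0)" for x y
  have "W \<noteq> []" using W(3) by auto
  moreover have "\<forall>k. Suc k < length W \<longrightarrow> R (W!k) (W!Suc k)"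
  proof (intro allI impI)
    fix k assume k: "Suc k < length W"
    then have "W!k \<in> set W" "W!Suc k \<in> set W" by simp_all
    then show "R (W!k) (W!Suc k)" using W(4,5) k unfolding R_def by blast
  qed
  ultimately obtain Q where Q: "Q \<noteq> []" "hd Q = hd W" "last Q = last W" "distinct Q"
      "set Q \<subseteq> set W" "length Q \<le> length W" "\<forall>k. Suc k < length Q \<longrightarrow> R (Q!k) (Q!Suc k)"
    by (rule walk_to_distinct)
  show ?thesis
  proof (rule that)
    show "is_path n m Q v"
      unfolding is_path_def
    proof (intro conjI allI impI)
      show "Q \<noteq> []" "hd Q = v" "last Q = zero_vertex m" "distinct Q" using Q W by simp_all
      show "\<forall>x\<in>set Q. is_vertex n m x" using Q(5) W(4) by blast
      fix k assume "Suc k < length Q"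
      then show "adjacent n m (Q!k) (Q!Suc k)" using Q(7) unfolding R_def adjacent_def by blast
    qed
    show "int (path_len Q) \<le> (\<Sum>i\<le>m. \<bar>D i\<bar>)" using Q(6) W(3) sum_N by (simp add: path_len_def)
    show "D i * dir_val d > 0" if step: "has_step n m Q d i" for d i
    proof -
      obtain k where k: "Suc k < length Q" "shift n m d i (Q!k) (Q!Suc k)"
        using step unfolding has_step_def by blast
      then obtain d' i' where "shift n m d' i' (Q!k) (Q!Suc k)" "D i' * dir_val d' > 0"
        using Q(7) unfolding R_def by blast
      then show ?thesis using shift_unique[OF assms(1,2) k(2)] by blast
    qed
  qed
qed

lemma is_wall_mono:
  assumes "is_wall n m P p" "\<And>d i. has_step n m Q d i \<Longrightarrow> has_step n m P d i"
  shows "is_wall n m Q p"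
  using assms unfolding is_wall_def inner_walls_def by blast

lemma pivot_path_length_le:
  assumes "n > 1" "m \<ge> 1" "is_vertex n m v" "p_pivot_path n m p v P" "potential n m v D"
    and "\<And>d i. D i * dir_val d > 0 \<Longrightarrow> has_step n m P d i"
  shows "int (path_len P) \<le> (\<Sum>i\<le>m. \<bar>D i\<bar>)"
proof -
  obtain Q where Q: "is_path n m Q v" "int (path_len Q) \<le> (\<Sum>i\<le>m. \<bar>D i\<bar>)"
      "\<And>d i. has_step n m Q d i \<Longrightarrow> D i * dir_val d > 0"
    using greedy_path[OF assms(1,2,3,5)] by blast
  have "is_wall n m Q p"
    using is_wall_mono[of n m P p Q] assms(4,6) Q(3) unfolding p_pivot_path_def by blast
  then have "path_len P \<le> path_len Q" using assms(4) Q(1) unfolding p_pivot_path_def by blast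
  with Q(2) show ?thesis by linarith
qed

lemma pivot_path_step_sign:
  assumes "n > 1" "m \<ge> 1" "is_vertex n m v" "pivot_path n m v P"
  obtains D where "potential n m v D" "\<And>d i. has_step n m P d i \<Longrightarrow> D i * dir_val d > 0"
proof -
  obtain p where pivot: "p_pivot_path n m p v P" using assms(4) unfolding pivot_path_def by blast
  then have "P \<noteq> []" "hd P = v" "last P = zero_vertex m"
    "\<forall>k. Suc k < length P \<longrightarrow> adjacent n m (P!k) (P!Suc k)"
    unfolding p_pivot_path_def is_path_def by blast+
  then obtain Lc Rc where LR: "potential n m v (\<lambda>i. int (Lc i) - int (Rc i))"
      "(\<Sum>i\<le>m. Lc i + Rc i) = path_len P"
      "\<forall>i. Lc i > 0 \<longleftrightarrow> has_step n m P Left i" "\<forall>i. Rc i > 0 \<longleftrightarrow> has_step n m P Right i"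
    using walk_shift_counts[OF assms(1,2)] unfolding path_len_def by blast
  define D where "D = (\<lambda>i. int (Lc i) - int (Rc i))"
  have "has_step n m P d i" if "D i * dir_val d > 0" for d i
    using that LR(3,4) by (cases d) (auto simp: D_def dir_val_def)
  then have shortest: "int (path_len P) \<le> (\<Sum>i\<le>m. \<bar>D i\<bar>)"
    using pivot_path_length_le[OF assms(1-3) pivot LR(1)[folded D_def]] by blast
  have length_P: "(\<Sum>i\<le>m. int (Lc i + Rc i)) = int (path_len P)"
    unfolding LR(2)[symmetric] by (simp only: of_nat_sum)
  have one_way: "\<bar>D i\<bar> = int (Lc i + Rc i)" if "i \<le> m" for i
  proof (rule sum_mono_inv[of "\<lambda>i. \<bar>D i\<bar>" "{..m}"])
    show "(\<Sum>i\<le>m. \<bar>D i\<bar>) = (\<Sum>i\<le>m. int (Lc i + Rc i))"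
      using shortest length_P sum_mono[of "{..m}" "\<lambda>i. \<bar>D i\<bar>" "\<lambda>i. int (Lc i + Rc i)"]
      by (force simp: D_def)
  qed (use that in \<open>auto simp: D_def\<close>)
  show ?thesis
  proof (rule that)
    show "potential n m v D" using LR(1) by (simp add: D_def)
    show "D i * dir_val d > 0" if "has_step n m P d i" for d i
    proof -
      have "i \<le> m" using that by (auto simp: has_step_def shift_def)
      then show ?thesis
        using that one_way[of i] LR(3,4)[rule_format, of i] by (cases d) (auto simp: D_def dir_val_def)
    qed
  qed
qed

lemma sign_stable_unit_steps:
  fixes f :: "nat \<Rightarrow> int"
  assumes "i \<le> j" "\<And>k. i \<le> k \<Longrightarrow> k < j \<Longrightarrow> \<bar>f (Suc k) - f k\<bar> \<le> 1"
    and "\<And>k. i \<le> k \<Longrightarrow> k \<le> j \<Longrightarrow> f k \<noteq> 0"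
  shows "0 < f i \<longleftrightarrow> 0 < f j"
  using assms
proof (induction j)
  case 0
  then show ?case by simp
next
  case (Suc j)
  show ?case
  proof (cases "i = Suc j")
    case False
    have "0 < f i \<longleftrightarrow> 0 < f j" by (rule Suc.IH) (use Suc.prems False in auto)
    moreover have "\<bar>f (Suc j) - f j\<bar> \<le> 1" "f j \<noteq> 0" "f (Suc j) \<noteq> 0"
      using Suc.prems False by auto
    ultimately show ?thesis by auto
  qed simp
qed

lemma potential_sign_stable:
  assumes "is_vertex n m v" "potential n m v D" "i \<le> j" "j \<le> m"
    and "\<And>k. i \<le> k \<Longrightarrow> k \<le> j \<Longrightarrow> D k \<noteq> 0"
  shows "0 < D i \<longleftrightarrow> 0 < D j"
proof (rule sign_stable_unit_steps[OF assms(3) _ assms(5)])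
  fix k assume "i \<le> k" "k < j"
  then have "1 \<le> Suc k" "Suc k \<le> m" using assms(4) by auto
  then have "v ! Suc k = D k - D (Suc k)" using assms(2) unfolding potential_def by auto
  moreover have "\<forall>j\<in>{1..m}. v ! j \<in> {-1,0,1}" using assms(1) unfolding is_vertex_def by blast
  then have "v ! Suc k \<in> {-1,0,1}" using \<open>Suc k \<le> m\<close> by simp
  ultimately show "\<bar>D (Suc k) - D k\<bar> \<le> 1" by auto
qed

lemma P_interval_shifted_positions:
  assumes "P_interval n m P I" "i \<in> I" "j + 1 \<in> I" "i \<le> k" "k \<le> j"
  shows "0 \<le> k \<and> k \<le> int m \<and> (\<exists>d. has_step n m P d (nat k))"
proof -
  define W where "W = {-1, int m + 1} \<union> inner_walls n m P"
  obtain a b where ab: "a \<in> W" "b \<in> W" "\<forall>c\<in>W. \<not> (a < c \<and> c < b)" "I = {a + 1..b}"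
    using assms(1) unfolding P_interval_def W_def Let_def by blast
  have "-1 \<le> a" "b \<le> int m + 1" using ab(1,2) by (auto simp: W_def inner_walls_def)
  moreover have "a < k" "k < b" using assms(2-5) ab(4) by auto
  ultimately have "0 \<le> k" "k \<le> int m" "k \<notin> inner_walls n m P" using ab(3) W_def by auto
  then show ?thesis by (auto simp: inner_walls_def)
qed

lemma P_interval_potential_sign:
  assumes "is_vertex n m v" "potential n m v D" "P_interval n m P I"
    and sign: "\<And>d k. has_step n m P d k \<Longrightarrow> D k * dir_val d > 0"
    and st: "s \<in> I" "t + 1 \<in> I" "s \<le> t"
  shows "0 < D (nat s) \<longleftrightarrow> 0 < D (nat t)"
proof (rule potential_sign_stable[OF assms(1,2)])
  have "0 \<le> s" "t \<le> int m"
    using P_interval_shifted_positions[OF assms(3) st(1,2), of s]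
      P_interval_shifted_positions[OF assms(3) st(1,2), of t] st(3) by auto
  then show "nat s \<le> nat t" "nat t \<le> m" using st(3) by auto
  show "D k \<noteq> 0" if "nat s \<le> k" "k \<le> nat t" for k
  proof -
    have "s \<le> int k" "int k \<le> t" using that \<open>0 \<le> s\<close> st(3) by auto
    then obtain d where "has_step n m P d k"
      using P_interval_shifted_positions[OF assms(3) st(1,2), of "int k"] by auto
    then have "D k * dir_val d > 0" by (rule sign)
    then show ?thesis by auto
  qed
qed

theorem lemma5p11:
  fixes n m :: nat and v :: "int list" and P :: "int list list" and I :: "int set"
  assumes "n > 1" and "m \<ge> 1"
    and "is_vertex n m v"
    and "pivot_path n m v P"
    and "P_interval n m P I"
  shows "\<forall>i j d1 d2. i \<in> I \<and> i + 1 \<in> I \<and> j \<in> I \<and> j + 1 \<in> I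
           \<and> has_step n m P d1 (nat i) \<and> has_step n m P d2 (nat j) \<longrightarrow> d1 = d2"
proof (intro allI impI, elim conjE)
  fix i j d1 d2
  assume i: "i \<in> I" "i + 1 \<in> I" and j: "j \<in> I" "j + 1 \<in> I"
    and steps: "has_step n m P d1 (nat i)" "has_step n m P d2 (nat j)"
  obtain D where pot: "potential n m v D"
    and sign: "\<And>d k. has_step n m P d k \<Longrightarrow> D k * dir_val d > 0"
    using pivot_path_step_sign[OF assms(1-4)] by metis
  have "0 < D (nat i) \<longleftrightarrow> 0 < D (nat j)"
  proof (cases "i \<le> j")
    case True
    then show ?thesis using P_interval_potential_sign[OF assms(3) pot assms(5) sign i(1) j(2)] by blast
  next
    case False
    then show ?thesis using P_interval_potential_sign[OF assms(3) pot assms(5) sign j(1) i(2)] by simp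
  qed
  then show "d1 = d2" using sign[OF steps(1)] sign[OF steps(2)]
    by (cases d1; cases d2) (auto simp: dir_val_def)
qed

end
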